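(* Let $(x_n)_{n\ge1}$ be a real sequence and $(L_m)_{m\ge1}$ pairwise distinct elements of $[-\infty,+\infty]$ with $\sum_{m=1}^\infty i(x_n;L_m)=1$. Then for every $L\in\mathbb R$ different from all $L_m$, one has $i(x_n;L)=0$, and every subsequence $(x_{k(n)})_{n\ge1}$ converging to $L$ satisfies $\delta_-(\{k(n)\mid n\in\mathbb N\})=0$.
   Context: Let $\mathbb N=\{1,2,\dots\}$. For $K\subseteq\mathbb N$, $\delta_-(K)=\liminf_{n\to\infty}\frac{|K\cap\{1,\dots,n\}|}{n}$, $\delta_+(K)=\limsup_{n\to\infty}\frac{|K\cap\{1,\dots,n\}|}{n}$. For $L\in\mathbb R$: $i(x_n;L)=1-\sup_{\varepsilon>0}\delta_+(\{n\mid |x_n-L|\ge\varepsilon\})$; $i(x_n;+\infty)=1-\sup_{M\in\mathbb R}\delta_+(\{n\mid x_n\le M\})$; $i(x_n;-\infty)=1-\sup_{M\in\mathbb R}\delta_+(\{n\mid x_n\ge M\})$. *)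

theory Defs
  imports "HOL-Analysis.Analysis"
begin

text \<open>Natural numbers of the paper are {1,2,...}; a sequence is a function nat => real
  whose value at 0 is irrelevant (all counting is done on {1..n}).\<close>

definition lower_density :: "nat set \<Rightarrow> real" where
  "lower_density K = real_of_ereal
     (liminf (\<lambda>n. ereal (real (card (K \<inter> {1..n})) / real n)))"

definition upper_density :: "nat set \<Rightarrow> real" where
  "upper_density K = real_of_ereal
     (limsup (\<lambda>n. ereal (real (card (K \<inter> {1..n})) / real n)))"

definition stat_index :: "(nat \<Rightarrow> real) \<Rightarrow> ereal \<Rightarrow> real" where
  "stat_index x L = (case L of
      ereal l \<Rightarrow> 1 - (SUP e\<in>{0<..}. upper_density {n. \<bar>x n - l\<bar> \<ge> e})
    | PInfty \<Rightarrow> 1 - (SUP M\<in>(UNIV::real set). upper_density {n. x n \<le> M})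
    | MInfty \<Rightarrow> 1 - (SUP M\<in>(UNIV::real set). upper_density {n. x n \<ge> M}))"

end

theory Submission
  imports Defs
begin

(* Call a real a a "mass" of the sequence x near a point P of the extended reals if
   every open neighbourhood U of P receives the values of x on an index set of lower density at
   least a.  Two kinds of masses occur in the theorem: the statistical index i(x;P) is a mass
   near P (the complement of the exceptional set defining the index has lower density
   1 - its upper density), and the lower density of the index set of a subsequence converging
   to L is a mass near L (all but finitely many of its indices land in U).  Masses near finitely
   many distinct points add up to at most 1: separate the points by pairwise disjoint open sets
   and use that lower density is superadditive on disjoint sets.  Hence, if the indices of the
   distinct points L_1, L_2, ... already sum to 1, any mass near a further point is 0. *)

definition density_ratio :: "nat set \<Rightarrow> nat \<Rightarrow> real" where
  "density_ratio K n = real (card (K \<inter> {1..n})) / real n"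

lemma density_ratio_bounds: "0 \<le> density_ratio K n" "density_ratio K n \<le> 1"
proof -
  have "card (K \<inter> {1..n}) \<le> n"
    using card_mono[of "{1..n}" "K \<inter> {1..n}"] by simp
  thus "0 \<le> density_ratio K n" "density_ratio K n \<le> 1"
    by (auto simp: density_ratio_def divide_le_eq_1)
qed

lemma density_ratio_mono: "A \<subseteq> B \<Longrightarrow> density_ratio A n \<le> density_ratio B n"
  unfolding density_ratio_def
  by (intro divide_right_mono of_nat_mono card_mono) auto

lemma density_ratio_Un_le:
  "density_ratio (A \<union> B) n \<le> density_ratio A n + density_ratio B n"
proof -
  have "card ((A \<union> B) \<inter> {1..n}) \<le> card (A \<inter> {1..n}) + card (B \<inter> {1..n})"
    by (metis Int_Un_distrib2 card_Un_le)
  thus ?thesis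
    unfolding density_ratio_def add_divide_distrib[symmetric]
    by (intro divide_right_mono) linarith+
qed

lemma density_ratio_Un_disjoint:
  "A \<inter> B = {} \<Longrightarrow> density_ratio (A \<union> B) n = density_ratio A n + density_ratio B n"
  unfolding density_ratio_def add_divide_distrib[symmetric] Int_Un_distrib2
  by (subst card_Un_disjoint) auto

lemma density_ratio_Compl: "n \<ge> 1 \<Longrightarrow> density_ratio (- C) n = 1 - density_ratio C n"
proof -
  assume "n \<ge> 1"
  have "card (- C \<inter> {1..n}) + card (C \<inter> {1..n}) = n"
    using card_Un_disjoint[of "- C \<inter> {1..n}" "C \<inter> {1..n}"]
    by (simp add: Int_Un_distrib2[symmetric] Int_assoc[symmetric] Int_commute)
  with \<open>n \<ge> 1\<close> show ?thesis
    by (simp add: density_ratio_def field_simps flip: of_nat_add)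
qed

(* The lower and upper densities are the liminf and limsup of the counting ratio; both lie in
   [0,1], so the truncation to real numbers in their definitions loses nothing. *)

lemma density_ratio_Liminf_Limsup_bounds:
  "0 \<le> liminf (\<lambda>n. ereal (density_ratio K n))"
  "liminf (\<lambda>n. ereal (density_ratio K n)) \<le> limsup (\<lambda>n. ereal (density_ratio K n))"
  "limsup (\<lambda>n. ereal (density_ratio K n)) \<le> 1"
  by (intro Liminf_bounded Liminf_le_Limsup Limsup_bounded; simp add: density_ratio_bounds)+

lemma ereal_lower_density:
  "ereal (lower_density K) = liminf (\<lambda>n. ereal (density_ratio K n))"
proof -
  let ?l = "liminf (\<lambda>n. ereal (density_ratio K n))"
  have "lower_density K = real_of_ereal ?l"
    by (simp add: lower_density_def density_ratio_def)
  moreover have "0 \<le> ?l" "?l \<le> 1"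
    using density_ratio_Liminf_Limsup_bounds[of K] by auto
  ultimately show ?thesis by (cases ?l) auto
qed

lemma ereal_upper_density:
  "ereal (upper_density K) = limsup (\<lambda>n. ereal (density_ratio K n))"
proof -
  let ?l = "limsup (\<lambda>n. ereal (density_ratio K n))"
  have "upper_density K = real_of_ereal ?l"
    by (simp add: upper_density_def density_ratio_def)
  moreover have "0 \<le> ?l" "?l \<le> 1"
    using density_ratio_Liminf_Limsup_bounds[of K] by auto
  ultimately show ?thesis by (cases ?l) auto
qed

lemma lower_density_bounds: "0 \<le> lower_density K" "lower_density K \<le> 1"
proof -
  note bounds = density_ratio_Liminf_Limsup_bounds[of K, folded ereal_lower_density]
  show "0 \<le> lower_density K" using bounds(1) by simp
  show "lower_density K \<le> 1" using order.trans[OF bounds(2,3)] by simp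
qed

lemma upper_density_bounds: "0 \<le> upper_density K" "upper_density K \<le> 1"
proof -
  note bounds = density_ratio_Liminf_Limsup_bounds[of K, folded ereal_upper_density]
  show "0 \<le> upper_density K" using order.trans[OF bounds(1,2)] by simp
  show "upper_density K \<le> 1" using bounds(3) by simp
qed

lemma lower_density_mono: "A \<subseteq> B \<Longrightarrow> lower_density A \<le> lower_density B"
proof -
  assume "A \<subseteq> B"
  hence "liminf (\<lambda>n. ereal (density_ratio A n)) \<le> liminf (\<lambda>n. ereal (density_ratio B n))"
    by (intro Liminf_mono) (simp add: density_ratio_mono)
  thus ?thesis by (simp flip: ereal_lower_density)
qed

lemma lower_density_superadditive:
  assumes "A \<inter> B = {}"
  shows "lower_density A + lower_density B \<le> lower_density (A \<union> B)"
proof -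
  have "liminf (\<lambda>n. ereal (density_ratio A n)) + liminf (\<lambda>n. ereal (density_ratio B n))
      \<le> liminf (\<lambda>n. ereal (density_ratio A n) + ereal (density_ratio B n))"
    by (intro Liminf_add_le) (simp_all add: density_ratio_bounds)
  also have "\<dots> = liminf (\<lambda>n. ereal (density_ratio (A \<union> B) n))"
    using assms by (simp add: density_ratio_Un_disjoint)
  finally show ?thesis by (simp flip: ereal_lower_density)
qed

lemma lower_density_Un_le:
  "lower_density (A \<union> B) \<le> lower_density A + upper_density B"
proof -
  have "liminf (\<lambda>n. ereal (density_ratio (A \<union> B) n))
      \<le> liminf (\<lambda>n. ereal (density_ratio A n) + ereal (density_ratio B n))"
    by (intro Liminf_mono) (simp add: density_ratio_Un_le)
  also have "\<dots> \<le> liminf (\<lambda>n. ereal (density_ratio A n)) + limsup (\<lambda>n. ereal (density_ratio B n))"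
    by (rule ereal_liminf_limsup_add)
  finally show ?thesis by (simp flip: ereal_lower_density ereal_upper_density)
qed

lemma upper_density_finite:
  assumes "finite F"
  shows "upper_density F = 0"
proof -
  have "density_ratio F n \<le> real (card F) / real n" for n
    unfolding density_ratio_def
    by (intro divide_right_mono of_nat_mono card_mono) (use assms in auto)
  hence "density_ratio F \<longlonglongrightarrow> 0"
    by (intro tendsto_sandwich[OF _ _ tendsto_const lim_const_over_n[of "real (card F)"]])
       (simp_all add: density_ratio_bounds)
  hence "limsup (\<lambda>n. ereal (density_ratio F n)) = 0"
    by (intro lim_imp_Limsup) (simp_all add: zero_ereal_def)
  thus ?thesis by (simp flip: ereal_upper_density)
qed

lemma lower_density_Compl: "lower_density (- C) = 1 - upper_density C"
proof -
  have "liminf (\<lambda>n. ereal (density_ratio (- C) n)) = liminf (\<lambda>n. 1 - ereal (density_ratio C n))"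
    by (intro Liminf_eq eventually_mono[OF eventually_ge_at_top[of 1]])
       (simp add: density_ratio_Compl one_ereal_def)
  also have "\<dots> = 1 - limsup (\<lambda>n. ereal (density_ratio C n))"
    by (rule liminf_ereal_cminus) simp
  finally have "ereal (lower_density (- C)) = ereal (1 - upper_density C)"
    by (simp add: one_ereal_def flip: ereal_lower_density ereal_upper_density)
  thus ?thesis by simp
qed

lemma lower_density_ge_if_Compl:
  assumes "upper_density C \<le> 1 - a" "- C \<subseteq> A"
  shows "a \<le> lower_density A"
  using assms lower_density_mono[of "- C" A] by (simp add: lower_density_Compl)

definition mass_near :: "(nat \<Rightarrow> real) \<Rightarrow> ereal \<Rightarrow> real \<Rightarrow> bool" where
  "mass_near x P a \<longleftrightarrow> (\<forall>U. open U \<longrightarrow> P \<in> U \<longrightarrow> a \<le> lower_density {n. ereal (x n) \<in> U})"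

(* The statistical index is nonnegative, since every upper density is at most 1. *)
lemma stat_index_nonneg: "0 \<le> stat_index x P"
proof -
  have "(SUP t\<in>T. upper_density (C t)) \<le> 1" if "T \<noteq> {}" for T :: "real set" and C
    using that by (intro cSUP_least) (simp_all add: upper_density_bounds)
  thus ?thesis unfolding stat_index_def by (cases P) simp_all
qed

(* The statistical index of x at P is a mass near P: outside the exceptional set
   {n. |x n - l| \<ge> d} (resp. {x n \<le> M}, {x n \<ge> M}) all values lie in the neighbourhood. *)
lemma stat_index_mass_near: "mass_near x P (stat_index x P)"
  unfolding mass_near_def
proof (intro allI impI)
  fix U :: "ereal set" assume U: "open U" "P \<in> U"
  let ?A = "{n. ereal (x n) \<in> U}"
  have SUP_upper: "upper_density (C t) \<le> (SUP t\<in>T. upper_density (C t))"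
    if "t \<in> T" for t and T :: "real set" and C
    using that upper_density_bounds(2) by (intro cSUP_upper bdd_aboveI2)
  show "stat_index x P \<le> lower_density ?A"
  proof (cases P)
    case (real l)
    have "open (ereal -` U)" "l \<in> ereal -` U" using U real by (simp_all add: open_ereal_vimage)
    then obtain d where d: "d > 0" "ball l d \<subseteq> ereal -` U" by (rule openE)
    show ?thesis
    proof (rule lower_density_ge_if_Compl)
      show "upper_density {n. d \<le> \<bar>x n - l\<bar>} \<le> 1 - stat_index x P"
        using SUP_upper[of d _ "\<lambda>e. {n. e \<le> \<bar>x n - l\<bar>}"] d by (simp add: stat_index_def real)
      show "- {n. d \<le> \<bar>x n - l\<bar>} \<subseteq> ?A"
        using d(2) by (force simp: dist_real_def)
    qed
  next
    case PInf
    then obtain M where M: "{ereal M<..} \<subseteq> U" using open_PInfty[OF U(1)] U by auto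
    show ?thesis
    proof (rule lower_density_ge_if_Compl)
      show "upper_density {n. x n \<le> M} \<le> 1 - stat_index x P"
        using SUP_upper[of M _ "\<lambda>M. {n. x n \<le> M}"] by (simp add: stat_index_def PInf)
      show "- {n. x n \<le> M} \<subseteq> ?A" using M by auto
    qed
  next
    case MInf
    then obtain M where M: "{..<ereal M} \<subseteq> U" using open_MInfty[OF U(1)] U by auto
    show ?thesis
    proof (rule lower_density_ge_if_Compl)
      show "upper_density {n. M \<le> x n} \<le> 1 - stat_index x P"
        using SUP_upper[of M _ "\<lambda>M. {n. M \<le> x n}"] by (simp add: stat_index_def MInf)
      show "- {n. M \<le> x n} \<subseteq> ?A" using M by auto
    qed
  qed
qed

(* If x converges to L along k, the index set of k is a mass near L: except for the finitely many
   indices k n with n < N, all of it is mapped into a given neighbourhood of L. *)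
lemma subsequence_mass_near:
  fixes x :: "nat \<Rightarrow> real" and k :: "nat \<Rightarrow> nat"
  assumes lim: "(\<lambda>n. x (k n)) \<longlonglongrightarrow> L"
  shows "mass_near x (ereal L) (lower_density (k ` A))"
  unfolding mass_near_def
proof (intro allI impI)
  fix U :: "ereal set" assume "open U" "ereal L \<in> U"
  moreover have "(\<lambda>n. ereal (x (k n))) \<longlonglongrightarrow> ereal L" using lim by (rule tendsto_ereal)
  ultimately have "eventually (\<lambda>n. ereal (x (k n)) \<in> U) sequentially"
    by (rule topological_tendstoD[rotated])
  then obtain N where N: "\<And>n. n \<ge> N \<Longrightarrow> ereal (x (k n)) \<in> U"
    by (auto simp: eventually_sequentially)
  have "k ` A \<subseteq> {n. ereal (x n) \<in> U} \<union> k ` {..<N}"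
  proof
    fix m assume "m \<in> k ` A"
    then obtain j where "m = k j" by blast
    thus "m \<in> {n. ereal (x n) \<in> U} \<union> k ` {..<N}"
      using N[of j] by (cases "j < N") auto
  qed
  hence "lower_density (k ` A) \<le> lower_density ({n. ereal (x n) \<in> U} \<union> k ` {..<N})"
    by (rule lower_density_mono)
  also have "\<dots> \<le> lower_density {n. ereal (x n) \<in> U} + upper_density (k ` {..<N})"
    by (rule lower_density_Un_le)
  also have "upper_density (k ` {..<N}) = 0" by (simp add: upper_density_finite)
  finally show "lower_density (k ` A) \<le> lower_density {n. ereal (x n) \<in> U}" by simp
qed

lemma finite_hausdorff_separation:
  fixes P :: "'i \<Rightarrow> 'a::t2_space"
  assumes "finite S" "inj_on P S"
  shows "\<exists>U. (\<forall>j\<in>S. open (U j) \<and> P j \<in> U j) \<and> disjoint_family_on U S"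
  using assms
proof (induction S rule: finite_induct)
  case empty
  show ?case by (simp add: disjoint_family_on_def)
next
  case (insert i S)
  then obtain U where U: "\<forall>j\<in>S. open (U j) \<and> P j \<in> U j" "disjoint_family_on U S"
    by auto
  have "\<forall>j\<in>S. \<exists>V W. open V \<and> open W \<and> P j \<in> V \<and> P i \<in> W \<and> V \<inter> W = {}"
    using insert.prems insert.hyps(2) by (intro ballI hausdorff) (auto simp: inj_on_def)
  then obtain V W where VW: "\<forall>j\<in>S. open (V j) \<and> open (W j) \<and> P j \<in> V j \<and> P i \<in> W j
      \<and> V j \<inter> W j = {}"
    by meson
  define U' where "U' j = (if j = i then (\<Inter>j\<in>S. W j) else U j \<inter> V j)" for j
  have "\<forall>j\<in>insert i S. open (U' j) \<and> P j \<in> U' j"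
    using U(1) VW insert.hyps(1,2) by (auto simp: U'_def)
  moreover have "U' j \<inter> U' j' = {}" if "j \<in> insert i S" "j' \<in> insert i S" "j \<noteq> j'" for j j'
  proof -
    have "U' i \<inter> U' m = {}" if "m \<in> S" for m
    proof -
      have "U' i \<subseteq> W m" "U' m \<subseteq> V m" using that insert.hyps(2) by (auto simp: U'_def)
      thus ?thesis using VW that by blast
    qed
    moreover have "U' m \<inter> U' m' = {}" if "m \<in> S" "m' \<in> S" "m \<noteq> m'" for m m'
    proof -
      have "U' m \<subseteq> U m" "U' m' \<subseteq> U m'" using that insert.hyps(2) by (auto simp: U'_def)
      thus ?thesis using disjoint_family_onD[OF U(2)] that by blast
    qed
    ultimately show ?thesis using that by blast
  qed
  hence "disjoint_family_on U' (insert i S)" by (simp add: disjoint_family_on_def)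
  ultimately show ?case by blast
qed

lemma lower_density_disjoint_sum_le_1:
  assumes "finite S" "disjoint_family_on A S"
  shows "(\<Sum>j\<in>S. lower_density (A j)) \<le> 1"
proof -
  have "(\<Sum>j\<in>S. lower_density (A j)) \<le> lower_density (\<Union>j\<in>S. A j)"
    using assms
  proof (induction S rule: finite_induct)
    case (insert i S)
    have "A i \<inter> (\<Union>j\<in>S. A j) = {}"
      using insert.prems insert.hyps(2) by (auto simp: disjoint_family_on_def)
    hence "lower_density (A i) + lower_density (\<Union>j\<in>S. A j) \<le> lower_density (\<Union>j\<in>insert i S. A j)"
      using lower_density_superadditive by simp
    moreover have "(\<Sum>j\<in>S. lower_density (A j)) \<le> lower_density (\<Union>j\<in>S. A j)"
      using insert.IH insert.prems by (auto simp: disjoint_family_on_def)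
    ultimately show ?case using insert.hyps by simp
  qed (simp add: lower_density_bounds)
  also have "\<dots> \<le> 1" by (rule lower_density_bounds)
  finally show ?thesis .
qed

lemma mass_near_sum_le_1:
  assumes "finite S" "inj_on P S" "\<And>j. j \<in> S \<Longrightarrow> mass_near x (P j) (a j)"
  shows "sum a S \<le> 1"
proof -
  obtain U where U: "\<forall>j\<in>S. open (U j) \<and> P j \<in> U j" "disjoint_family_on U S"
    using finite_hausdorff_separation[OF assms(1,2)] by blast
  define A where "A j = {n. ereal (x n) \<in> U j}" for j
  have "sum a S \<le> (\<Sum>j\<in>S. lower_density (A j))"
    using assms(3) U(1) by (intro sum_mono) (simp add: mass_near_def A_def)
  also have "\<dots> \<le> 1"
    using assms(1) U(2) by (intro lower_density_disjoint_sum_le_1) (auto simp: disjoint_family_on_def A_def)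
  finally show ?thesis .
qed

(* If the indices at the distinct points Ls 1, Ls 2, ... sum to 1, then every mass near a point
   P outside this list is at most 0: each partial sum plus the mass is at most 1. *)
lemma mass_near_outside_limits:
  fixes x :: "nat \<Rightarrow> real" and Ls :: "nat \<Rightarrow> ereal"
  assumes inj: "inj_on Ls {1..}"
    and sum1: "(\<lambda>m. stat_index x (Ls (m + 1))) sums 1"
    and notin: "P \<notin> Ls ` {1..}"
    and mass: "mass_near x P a"
  shows "a \<le> 0"
proof -
  have partial: "a + (\<Sum>m<M. stat_index x (Ls (m + 1))) \<le> 1" for M
  proof -
    define Q where "Q j = (if j = 0 then P else Ls j)" for j
    define c where "c j = (if j = 0 then a else stat_index x (Ls j))" for j
    have "inj_on Q {..M}"
      using inj notin by (auto simp: inj_on_def Q_def Suc_le_eq)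
    moreover have "mass_near x (Q j) (c j)" for j
      using mass stat_index_mass_near by (simp add: Q_def c_def)
    ultimately have "sum c {..M} \<le> 1" by (intro mass_near_sum_le_1) auto
    thus ?thesis by (simp add: sum.atMost_shift c_def)
  qed
  have "(\<lambda>M. a + (\<Sum>m<M. stat_index x (Ls (m + 1)))) \<longlonglongrightarrow> a + 1"
    using sum1 by (intro tendsto_add tendsto_const) (simp add: sums_def)
  hence "a + 1 \<le> 1" using partial by (intro LIMSEQ_le_const2) auto
  thus ?thesis by simp
qed

(* Both conclusions are masses near L, hence 0 by the previous lemma and nonnegativity. *)
theorem mainTheorem3:
  fixes x :: "nat \<Rightarrow> real" and Ls :: "nat \<Rightarrow> ereal"
  assumes distinct: "inj_on Ls {1..}"
    and sum1: "(\<lambda>m. stat_index x (Ls (m + 1))) sums 1"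
  shows "\<forall>L::real. ereal L \<notin> Ls ` {1..} \<longrightarrow>
           stat_index x (ereal L) = 0 \<and>
           (\<forall>k :: nat \<Rightarrow> nat. strict_mono_on {1..} k \<and> (\<forall>n\<ge>1. k n \<ge> 1)
               \<and> (\<lambda>n. x (k n)) \<longlonglongrightarrow> L
               \<longrightarrow> lower_density (k ` {1..}) = 0)"
proof (intro allI impI conjI)
  fix L :: real assume notin: "ereal L \<notin> Ls ` {1..}"
  note no_mass = mass_near_outside_limits[OF distinct sum1 notin]
  show "stat_index x (ereal L) = 0"
    using no_mass[OF stat_index_mass_near] stat_index_nonneg by (rule order.antisym)
  fix k :: "nat \<Rightarrow> nat"
  assume "strict_mono_on {1..} k \<and> (\<forall>n\<ge>1. k n \<ge> 1) \<and> (\<lambda>n. x (k n)) \<longlonglongrightarrow> L"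
  hence "mass_near x (ereal L) (lower_density (k ` {1..}))"
    using subsequence_mass_near by blast
  thus "lower_density (k ` {1..}) = 0"
    using no_mass lower_density_bounds(1) order.antisym by blast
qed

end
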